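(* Let $\mathcal{U}$ be a finite set of submitted data units, each with a submitted identity, let $e_\theta$ be an evidence function whose graph on $\mathcal{U}$ has connected components (clusters) $C_1,\dots,C_K$, let $R_\theta$ be a cluster representative operator, and let $\bar v_\theta$ be the resulting quotient game on $[K]$. Let the quotient semivalue attribution pay submitted identity $i$ the amount $p_i^{Q,\omega}(S)=\sum_{k=1}^K a_{i,k}\,\varphi_k^\omega(\bar v_\theta)$ with within-cluster shares $a_{i,k}\in[0,1]$, $\sum_i a_{i,k}=1$. Suppose a manipulation $\alpha$ by latent provider $i$, replacing identity $i$ by pseudonyms $I_i^\alpha$ and producing profile $S^\alpha$ with quotient game $\bar v_\theta^\alpha$ and shares $a^\alpha_{j,k}$, is quotient-stable, and the within-cluster allocation rule is false-name-neutral. Then for any semivalue weights $\omega$ and any value function $\bar v_\theta$, the additive false-name gain \[\Gamma_i=\sum_{j\in I_i^\alpha}p_j^{Q,\omega}(S^\alpha)-p_i^{Q,\omega}(S)\] equals $0$; that is, quotient semivalue attribution is exactly false-name-proof against $\alpha$.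
   Context: Evidence function: $e_\theta(u,u')\in\{0,1\}$; the graph $G_\theta$ on $\mathcal{U}$ has an edge between $u,u'$ iff $e_\theta(u,u')=1$, and its connected components $C_1,\dots,C_K$ are the attribution clusters. A cluster representative $R_\theta$ maps each cluster to a multiset of canonical training units (e.g., collapsing exact duplicates). The quotient game is $\bar v_\theta(Q)=U(A(\bigcup_{k\in Q}R_\theta(C_k)))-U(A(\emptyset))$ for $Q\subseteq[K]$, where $A$ is a learner mapping a multiset of training examples to a model and $U$ is a utility. Semivalue: $\varphi_k^\omega(w)=\sum_{Q\subseteq[K]\setminus\{k\}}\omega_{K,|Q|}[w(Q\cup\{k\})-w(Q)]$ with $\omega_{K,s}\ge0$, $\sum_s\binom{K-1}{s}\omega_{K,s}=1$. Quotient-stable: the manipulation leaves (a) the set of clusters unchanged up to relabelling of cluster ids and (b) each representative $R_\theta(C_k)$ unchanged as a multiset of canonical training units. False-name-neutral: for every cluster $k$, $\sum_{j\in I_i^\alpha}a^\alpha_{j,k}=a_{i,k}$ (simultaneously for all $k$). *)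

theory Defs
  imports Complex_Main "HOL-Library.Multiset"
begin

definition ev_edge :: "('u \<Rightarrow> 'u \<Rightarrow> bool) \<Rightarrow> 'u set \<Rightarrow> 'u \<Rightarrow> 'u \<Rightarrow> bool" where
  "ev_edge e Us x y \<longleftrightarrow> x \<in> Us \<and> y \<in> Us \<and> (e x y \<or> e y x)"

definition clusters :: "('u \<Rightarrow> 'u \<Rightarrow> bool) \<Rightarrow> 'u set \<Rightarrow> 'u set set" where
  "clusters e Us = (\<lambda>u. {v \<in> Us. (ev_edge e Us)\<^sup>*\<^sup>* u v}) ` Us"

text \<open>Quotient game on the set of clusters (clusters themselves serve as cluster ids).\<close>
definition quotient_game ::
  "('u set \<Rightarrow> 't multiset) \<Rightarrow> ('t multiset \<Rightarrow> 'm) \<Rightarrow> ('m \<Rightarrow> real) \<Rightarrow> 'u set set \<Rightarrow> real" where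
  "quotient_game R A Ut Q = Ut (A (\<Sum>C\<in>Q. R C)) - Ut (A {#})"

definition semivalue_weights :: "(nat \<Rightarrow> nat \<Rightarrow> real) \<Rightarrow> bool" where
  "semivalue_weights \<omega> \<longleftrightarrow> (\<forall>K s. 0 \<le> \<omega> K s) \<and>
     (\<forall>K\<ge>1. (\<Sum>s\<le>K - 1. real ((K - 1) choose s) * \<omega> K s) = 1)"

definition semivalue :: "(nat \<Rightarrow> nat \<Rightarrow> real) \<Rightarrow> 'p set \<Rightarrow> ('p set \<Rightarrow> real) \<Rightarrow> 'p \<Rightarrow> real" where
  "semivalue \<omega> N w k = (\<Sum>Q\<in>Pow (N - {k}). \<omega> (card N) (card Q) * (w (insert k Q) - w Q))"

definition qpay ::
  "(nat \<Rightarrow> nat \<Rightarrow> real) \<Rightarrow> ('u \<Rightarrow> 'u \<Rightarrow> bool) \<Rightarrow> 'u set \<Rightarrow> ('u set \<Rightarrow> 't multiset)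
    \<Rightarrow> ('t multiset \<Rightarrow> 'm) \<Rightarrow> ('m \<Rightarrow> real) \<Rightarrow> ('i \<Rightarrow> 'u set \<Rightarrow> real) \<Rightarrow> 'i \<Rightarrow> real" where
  "qpay \<omega> e Us R A Ut a j =
     (\<Sum>C\<in>clusters e Us. a j C * semivalue \<omega> (clusters e Us) (quotient_game R A Ut) C)"

end

theory Submission
  imports Defs
begin

text \<open>A quotient-stable manipulation only relabels the players of the quotient game, and a
  semivalue is invariant under relabelling; the payment is linear in the within-cluster shares,
  so the pseudonyms jointly collect the aggregated shares, which false-name neutrality equates
  with the shares of the original identity.\<close>

lemma semivalue_relabel:
  assumes bij: "bij_betw \<sigma> N N'" and k: "k \<in> N"
    and game: "\<And>Q. Q \<subseteq> N \<Longrightarrow> w' (\<sigma> ` Q) = w Q"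
  shows "semivalue \<omega> N' w' (\<sigma> k) = semivalue \<omega> N w k"
proof -
  have "bij_betw \<sigma> (N - {k}) (N' - {\<sigma> k})"
    using bij k by (intro bij_betw_DiffI) (auto simp: bij_betw_def)
  then have pow: "bij_betw (image \<sigma>) (Pow (N - {k})) (Pow (N' - {\<sigma> k}))"
    by (rule bij_betw_image_Pow)
  have "semivalue \<omega> N' w' (\<sigma> k) =
      (\<Sum>Q\<in>Pow (N - {k}). \<omega> (card N') (card (\<sigma> ` Q)) * (w' (insert (\<sigma> k) (\<sigma> ` Q)) - w' (\<sigma> ` Q)))"
    unfolding semivalue_def by (rule sum.reindex_bij_betw[OF pow, symmetric])
  also have "\<dots> = semivalue \<omega> N w k"
    unfolding semivalue_def
  proof (rule sum.cong[OF refl])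
    fix Q assume Q: "Q \<in> Pow (N - {k})"
    then have "Q \<subseteq> N" "insert k Q \<subseteq> N"
      using k by auto
    have "card N' = card N"
      using bij by (simp add: bij_betw_same_card)
    moreover have "card (\<sigma> ` Q) = card Q"
      using bij \<open>Q \<subseteq> N\<close> by (meson bij_betw_imp_inj_on card_image inj_on_subset)
    moreover have "w' (insert (\<sigma> k) (\<sigma> ` Q)) = w (insert k Q)"
      using game[OF \<open>insert k Q \<subseteq> N\<close>] by simp
    moreover have "w' (\<sigma> ` Q) = w Q"
      using game[OF \<open>Q \<subseteq> N\<close>] .
    ultimately show "\<omega> (card N') (card (\<sigma> ` Q)) * (w' (insert (\<sigma> k) (\<sigma> ` Q)) - w' (\<sigma> ` Q)) =
        \<omega> (card N) (card Q) * (w (insert k Q) - w Q)"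
      by simp
  qed
  finally show ?thesis .
qed

lemma quotient_game_relabel:
  assumes "inj_on \<sigma> Q" and "\<And>C. C \<in> Q \<Longrightarrow> R (\<sigma> C) = R C"
  shows "quotient_game R A Ut (\<sigma> ` Q) = quotient_game R A Ut Q"
proof -
  have "(\<Sum>C\<in>\<sigma> ` Q. R C) = (\<Sum>C\<in>Q. R (\<sigma> C))"
    using assms(1) by (simp add: sum.reindex)
  also have "\<dots> = (\<Sum>C\<in>Q. R C)"
    using assms(2) by simp
  finally show ?thesis
    unfolding quotient_game_def by simp
qed

lemma sum_qpay:
  "(\<Sum>j\<in>I. qpay \<omega> e Us R A Ut a j) =
    (\<Sum>C\<in>clusters e Us. (\<Sum>j\<in>I. a j C) * semivalue \<omega> (clusters e Us) (quotient_game R A Ut) C)"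
  unfolding qpay_def by (subst sum.swap) (simp add: sum_distrib_right)

theorem theorem2:
  fixes e :: "'u \<Rightarrow> 'u \<Rightarrow> bool"
    and Us Us' :: "'u set"
    and R :: "'u set \<Rightarrow> 't multiset"
    and A :: "'t multiset \<Rightarrow> 'm" and Ut :: "'m \<Rightarrow> real"
    and Ids Ids' I :: "'i set" and i :: 'i
    and a a' :: "'i \<Rightarrow> 'u set \<Rightarrow> real"
    and \<omega> :: "nat \<Rightarrow> nat \<Rightarrow> real"
    and \<sigma> :: "'u set \<Rightarrow> 'u set"
  assumes "finite Us" and "finite Us'"
    and "finite Ids" and "i \<in> Ids"
    and "finite I" and "I \<inter> (Ids - {i}) = {}" and "Ids' = (Ids - {i}) \<union> I"
    and "\<And>j C. j \<in> Ids \<Longrightarrow> C \<in> clusters e Us \<Longrightarrow> 0 \<le> a j C \<and> a j C \<le> 1"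
    and "\<And>C. C \<in> clusters e Us \<Longrightarrow> (\<Sum>j\<in>Ids. a j C) = 1"
    and "\<And>j C. j \<in> Ids' \<Longrightarrow> C \<in> clusters e Us' \<Longrightarrow> 0 \<le> a' j C \<and> a' j C \<le> 1"
    and "\<And>C. C \<in> clusters e Us' \<Longrightarrow> (\<Sum>j\<in>Ids'. a' j C) = 1"
    and semi: "semivalue_weights \<omega>"
    \<comment> \<open>quotient-stable: cluster relabelling preserving representatives\<close>
    and relabel: "bij_betw \<sigma> (clusters e Us) (clusters e Us')"
    and rep: "\<And>C. C \<in> clusters e Us \<Longrightarrow> R (\<sigma> C) = R C"
    \<comment> \<open>false-name-neutral\<close>
    and fnn: "\<And>C. C \<in> clusters e Us \<Longrightarrow> (\<Sum>j\<in>I. a' j (\<sigma> C)) = a i C"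
  shows "(\<Sum>j\<in>I. qpay \<omega> e Us' R A Ut a' j) - qpay \<omega> e Us R A Ut a i = 0"
proof -
  define N N' g where "N = clusters e Us" and "N' = clusters e Us'"
    and "g = quotient_game R A Ut"
  have bij: "bij_betw \<sigma> N N'"
    using relabel unfolding N_def N'_def .
  have semivalue_eq: "semivalue \<omega> N' g (\<sigma> C) = semivalue \<omega> N g C" if "C \<in> N" for C
  proof (rule semivalue_relabel[OF bij that])
    fix Q assume "Q \<subseteq> N"
    show "g (\<sigma> ` Q) = g Q"
      unfolding g_def
    proof (rule quotient_game_relabel)
      show "inj_on \<sigma> Q"
        using bij \<open>Q \<subseteq> N\<close> by (meson bij_betw_imp_inj_on inj_on_subset)
      show "R (\<sigma> C) = R C" if "C \<in> Q" for C
        using rep that \<open>Q \<subseteq> N\<close> unfolding N_def by blast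
    qed
  qed
  have "(\<Sum>j\<in>I. qpay \<omega> e Us' R A Ut a' j) = (\<Sum>C'\<in>N'. (\<Sum>j\<in>I. a' j C') * semivalue \<omega> N' g C')"
    unfolding sum_qpay N'_def g_def ..
  also have "\<dots> = (\<Sum>C\<in>N. (\<Sum>j\<in>I. a' j (\<sigma> C)) * semivalue \<omega> N' g (\<sigma> C))"
    by (rule sum.reindex_bij_betw[OF bij, symmetric])
  also have "\<dots> = (\<Sum>C\<in>N. a i C * semivalue \<omega> N g C)"
    using fnn semivalue_eq unfolding N_def by (intro sum.cong) auto
  also have "\<dots> = qpay \<omega> e Us R A Ut a i"
    unfolding qpay_def N_def g_def ..
  finally show ?thesis
    by simp
qed

end
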